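(* In the setting described in the context, for every node $j\in V$, $v_j\ge\dfrac{\delta}{\Pr(\zeta(j)=3)}$, where $\Pr(\zeta(j)=3)=1-\delta d_j^\oplus-\delta h_j$.
   Context: An SPSC instance: finite sets $S$ (services), $V$ (nodes), $U$ (users); sizes $s_i>0$; capacities $c_j>0$; for each user $k$ a service $i_k\in S$, a set $T_k\subseteq V$, a reward $w_k>0$. Let $\{x_{ij}\},\{y_k\}$ be an optimal solution of the LP with nonnegative variables: maximize $\sum_ky_kw_k$ s.t. $y_k\le\sum_{j\in T_k}x_{i_kj}$, $y_k\le1$; $\sum_ix_{ij}s_i\le c_j$; $x_{ij}=0$ if $s_i>c_j$; $0\le x_{ij}\le1$. Let $\beta:=1/4$, $\delta:=1/4$. For $j\in V$: $P_j^\oplus:=\{i:c_j/2<s_i\le c_j\}$, $P_j^\ominus:=\{i:c_j/4<s_i\le c_j/2\}$, $d_j^\oplus:=\sum_{i\in P_j^\oplus}x_{ij}$, $d_j^\ominus:=\sum_{i\in P_j^\ominus}x_{ij}$, $v_j:=\delta c_j/\sum_{i\in S:s_i\le c_j\beta}s_ix_{ij}$, $h_j:=d_j^\ominus$ if $d_j^\ominus<2$ and $h_j:=d_j^\ominus/2$ otherwise. The random construction map $\zeta:V\to\{1,2,3\}$ has $\zeta(j)$ independent over $j$, equal to $1,2,3$ with probabilities $\delta d_j^\oplus$, $\delta h_j$, $1-\delta d_j^\oplus-\delta h_j$. *)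

theory Defs
  imports "HOL-Analysis.Analysis"
begin

text \<open>SPSC instance: services S, nodes V, users U; sizes s, capacities c;
  each user k requests service svc k, can be served by nodes T k, reward w k.\<close>

definition spsc_instance ::
  "'i set \<Rightarrow> 'v set \<Rightarrow> 'u set \<Rightarrow> ('i \<Rightarrow> real) \<Rightarrow> ('v \<Rightarrow> real) \<Rightarrow>
   ('u \<Rightarrow> 'i) \<Rightarrow> ('u \<Rightarrow> 'v set) \<Rightarrow> ('u \<Rightarrow> real) \<Rightarrow> bool" where
  "spsc_instance S V U s c svc T w \<longleftrightarrow>
     finite S \<and> finite V \<and> finite U \<and>
     (\<forall>i\<in>S. s i > 0) \<and> (\<forall>j\<in>V. c j > 0) \<and>
     (\<forall>k\<in>U. svc k \<in> S \<and> T k \<subseteq> V \<and> w k > 0)"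

definition lp_feasible ::
  "'i set \<Rightarrow> 'v set \<Rightarrow> 'u set \<Rightarrow> ('i \<Rightarrow> real) \<Rightarrow> ('v \<Rightarrow> real) \<Rightarrow>
   ('u \<Rightarrow> 'i) \<Rightarrow> ('u \<Rightarrow> 'v set) \<Rightarrow> ('i \<Rightarrow> 'v \<Rightarrow> real) \<Rightarrow> ('u \<Rightarrow> real) \<Rightarrow> bool" where
  "lp_feasible S V U s c svc T x y \<longleftrightarrow>
     (\<forall>k\<in>U. 0 \<le> y k \<and> y k \<le> 1 \<and> y k \<le> (\<Sum>j\<in>T k. x (svc k) j)) \<and>
     (\<forall>j\<in>V. (\<Sum>i\<in>S. x i j * s i) \<le> c j) \<and>
     (\<forall>i\<in>S. \<forall>j\<in>V. s i > c j \<longrightarrow> x i j = 0) \<and>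
     (\<forall>i\<in>S. \<forall>j\<in>V. 0 \<le> x i j \<and> x i j \<le> 1)"

definition lp_optimal ::
  "'i set \<Rightarrow> 'v set \<Rightarrow> 'u set \<Rightarrow> ('i \<Rightarrow> real) \<Rightarrow> ('v \<Rightarrow> real) \<Rightarrow>
   ('u \<Rightarrow> 'i) \<Rightarrow> ('u \<Rightarrow> 'v set) \<Rightarrow> ('u \<Rightarrow> real) \<Rightarrow>
   ('i \<Rightarrow> 'v \<Rightarrow> real) \<Rightarrow> ('u \<Rightarrow> real) \<Rightarrow> bool" where
  "lp_optimal S V U s c svc T w x y \<longleftrightarrow>
     lp_feasible S V U s c svc T x y \<and>
     (\<forall>x' y'. lp_feasible S V U s c svc T x' y' \<longrightarrow>
        (\<Sum>k\<in>U. y' k * w k) \<le> (\<Sum>k\<in>U. y k * w k))"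

definition beta_c :: real where "beta_c = 1/4"
definition delta_c :: real where "delta_c = 1/4"

definition d_plus :: "'i set \<Rightarrow> ('i \<Rightarrow> real) \<Rightarrow> ('v \<Rightarrow> real) \<Rightarrow> ('i \<Rightarrow> 'v \<Rightarrow> real) \<Rightarrow> 'v \<Rightarrow> real" where
  "d_plus S s c x j = (\<Sum>i\<in>{i\<in>S. c j / 2 < s i \<and> s i \<le> c j}. x i j)"

definition d_minus :: "'i set \<Rightarrow> ('i \<Rightarrow> real) \<Rightarrow> ('v \<Rightarrow> real) \<Rightarrow> ('i \<Rightarrow> 'v \<Rightarrow> real) \<Rightarrow> 'v \<Rightarrow> real" where
  "d_minus S s c x j = (\<Sum>i\<in>{i\<in>S. c j / 4 < s i \<and> s i \<le> c j / 2}. x i j)"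

definition h_val :: "'i set \<Rightarrow> ('i \<Rightarrow> real) \<Rightarrow> ('v \<Rightarrow> real) \<Rightarrow> ('i \<Rightarrow> 'v \<Rightarrow> real) \<Rightarrow> 'v \<Rightarrow> real" where
  "h_val S s c x j = (if d_minus S s c x j < 2 then d_minus S s c x j else d_minus S s c x j / 2)"

text \<open>v_j = delta c_j / (sum of s_i x_ij over small services); value +\<infinity> if the
  denominator is 0 (the paper's convention for an empty/zero denominator).\<close>
definition v_val :: "'i set \<Rightarrow> ('i \<Rightarrow> real) \<Rightarrow> ('v \<Rightarrow> real) \<Rightarrow> ('i \<Rightarrow> 'v \<Rightarrow> real) \<Rightarrow> 'v \<Rightarrow> ereal" where
  "v_val S s c x j =
     (let D = (\<Sum>i\<in>{i\<in>S. s i \<le> c j * beta_c}. s i * x i j)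
      in if D = 0 then \<infinity> else ereal (delta_c * c j / D))"

definition prob_zeta3 :: "'i set \<Rightarrow> ('i \<Rightarrow> real) \<Rightarrow> ('v \<Rightarrow> real) \<Rightarrow> ('i \<Rightarrow> 'v \<Rightarrow> real) \<Rightarrow> 'v \<Rightarrow> real" where
  "prob_zeta3 S s c x j = 1 - delta_c * d_plus S s c x j - delta_c * h_val S s c x j"

end

theory Submission
  imports Defs
begin

text \<open>The capacity of node j is at least the load of its small services plus the load of its
  medium and large ones, and every medium (large) service occupies more than a quarter (half)
  of the capacity. Hence the small load D satisfies
  D \<le> c_j (1 - d_plus_j / 2 - d_minus_j / 4) \<le> c_j Pr(\<zeta>(j) = 3),
  which is the claim v_j = \<delta> c_j / D \<ge> \<delta> / Pr(\<zeta>(j) = 3).\<close>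

lemma sum_mult_ge_threshold:
  fixes x s :: "'a \<Rightarrow> real"
  assumes "\<And>i. i \<in> A \<Longrightarrow> 0 \<le> x i" and "\<And>i. i \<in> A \<Longrightarrow> t \<le> s i"
  shows "t * (\<Sum>i\<in>A. x i) \<le> (\<Sum>i\<in>A. x i * s i)"
  unfolding sum_distrib_left
  by (intro sum_mono) (metis assms mult.commute mult_right_mono)

lemma load_by_size_classes_le:
  fixes x s :: "'a \<Rightarrow> real"
  assumes "finite S" and "\<And>i. i \<in> S \<Longrightarrow> 0 < s i \<and> 0 \<le> x i"
    and "(\<Sum>i\<in>S. x i * s i) \<le> c"
  shows "(\<Sum>i\<in>{i\<in>S. s i \<le> c/4}. s i * x i)
           + c/4 * (\<Sum>i\<in>{i\<in>S. c/4 < s i \<and> s i \<le> c/2}. x i)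
           + c/2 * (\<Sum>i\<in>{i\<in>S. c/2 < s i \<and> s i \<le> c}. x i) \<le> c"
proof -
  define A where "A = {i\<in>S. s i \<le> c/4}"
  define B where "B = {i\<in>S. c/4 < s i \<and> s i \<le> c/2}"
  define C where "C = {i\<in>S. c/2 < s i \<and> s i \<le> c}"
  have nonneg: "\<And>i. i \<in> S \<Longrightarrow> 0 \<le> x i * s i"
    using assms(2) by (simp add: less_imp_le)
  have fin: "finite A" "finite B" "finite C" "finite (A \<union> B)"
    using assms(1) by (auto simp: A_def B_def C_def)
  have "c/4 * (\<Sum>i\<in>B. x i) \<le> (\<Sum>i\<in>B. x i * s i)"
    by (rule sum_mult_ge_threshold) (auto simp: B_def assms(2))
  moreover have "c/2 * (\<Sum>i\<in>C. x i) \<le> (\<Sum>i\<in>C. x i * s i)"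
    by (rule sum_mult_ge_threshold) (auto simp: C_def assms(2))
  moreover have "(\<Sum>i\<in>A \<union> B \<union> C. x i * s i)
                   = (\<Sum>i\<in>A. x i * s i) + (\<Sum>i\<in>B. x i * s i) + (\<Sum>i\<in>C. x i * s i)"
    using fin by (subst sum.union_disjoint sum.union_disjoint; auto simp: A_def B_def C_def)+
  moreover have "(\<Sum>i\<in>A \<union> B \<union> C. x i * s i) \<le> (\<Sum>i\<in>S. x i * s i)"
    by (rule sum_mono2) (auto simp: assms(1) nonneg A_def B_def C_def)
  ultimately show ?thesis
    using assms(3) unfolding A_def[symmetric] B_def[symmetric] C_def[symmetric]
    by (simp add: mult.commute)
qed

lemma ereal_div_le_if_le_mult:
  fixes D c p \<delta> :: real
  assumes "0 \<le> D" and "D \<le> c * p" and "0 < c" and "0 \<le> \<delta>"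
  shows "ereal (\<delta> / p) \<le> (if D = 0 then \<infinity> else ereal (\<delta> * c / D))"
proof (cases "D = 0")
  case False
  with assms have "0 < c * p" by linarith
  with \<open>0 < c\<close> have "0 < p" by (simp add: zero_less_mult_iff)
  moreover have "D * \<delta> \<le> c * p * \<delta>"
    using assms by (simp add: mult_right_mono)
  ultimately have "\<delta> / p \<le> \<delta> * c / D"
    using False assms by (simp add: field_simps)
  with False show ?thesis by simp
qed simp

theorem theorem15:
  fixes S :: "'i set" and V :: "'v set" and U :: "'u set"
    and s :: "'i \<Rightarrow> real" and c :: "'v \<Rightarrow> real"
    and svc :: "'u \<Rightarrow> 'i" and T :: "'u \<Rightarrow> 'v set" and w :: "'u \<Rightarrow> real"
    and x :: "'i \<Rightarrow> 'v \<Rightarrow> real" and y :: "'u \<Rightarrow> real"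
  assumes "spsc_instance S V U s c svc T w"
    and "lp_optimal S V U s c svc T w x y"
    and "j \<in> V"
  shows "v_val S s c x j \<ge> ereal (delta_c / prob_zeta3 S s c x j)"
proof -
  have fin: "finite S" and c_pos: "0 < c j" and sx: "\<And>i. i \<in> S \<Longrightarrow> 0 < s i \<and> 0 \<le> x i j"
    and cap: "(\<Sum>i\<in>S. x i j * s i) \<le> c j"
    using assms by (auto simp: spsc_instance_def lp_optimal_def lp_feasible_def)
  define D where "D = (\<Sum>i\<in>{i\<in>S. s i \<le> c j * beta_c}. s i * x i j)"
  define dp where "dp = d_plus S s c x j"
  define dm where "dm = d_minus S s c x j"
  have load: "D + c j/4 * dm + c j/2 * dp \<le> c j"
    using load_by_size_classes_le[of S s "\<lambda>i. x i j", OF fin sx cap]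
    by (simp add: D_def dm_def dp_def d_minus_def d_plus_def beta_c_def)
  have "0 \<le> D" unfolding D_def by (rule sum_nonneg) (simp add: sx less_imp_le)
  have "0 \<le> dp" unfolding dp_def d_plus_def by (rule sum_nonneg) (simp add: sx)
  have "0 \<le> dm" unfolding dm_def d_minus_def by (rule sum_nonneg) (simp add: sx)
  then have "h_val S s c x j \<le> dm" by (simp add: h_val_def dm_def)
  then have "c j * h_val S s c x j \<le> c j * dm" "0 \<le> c j * dp"
    using c_pos \<open>0 \<le> dp\<close> by simp_all
  then have "D \<le> c j * prob_zeta3 S s c x j"
    using load by (simp add: prob_zeta3_def delta_c_def dp_def algebra_simps)
  then have "ereal (delta_c / prob_zeta3 S s c x j)
               \<le> (if D = 0 then \<infinity> else ereal (delta_c * c j / D))"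
    by (rule ereal_div_le_if_le_mult[OF \<open>0 \<le> D\<close> _ c_pos]) (simp add: delta_c_def)
  then show ?thesis unfolding v_val_def D_def[symmetric] by (simp add: Let_def)
qed

end
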